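(* Let $G=(V,E)$ be a weighted strongly connected directed graph on $N$ vertices with edge weights $w_{uv}\ge 0$, and let $S_0\subseteq V$ be the initial set of mutants. If $G$ is a uniform circulation, i.e. there exists $m>0$ such that $\sum_{v\in V}w_{uv}=\sum_{v\in V}w_{vu}=m$ for all $u\in V$, then $\mathsf{fp}_{r=1}^{\delta}(G,S_0)=|S_0|/N$ for every $\delta\in[0,1]$.
   Context: Mixed $\delta$-updating on a weighted directed graph $G=(V,E)$ with $N$ vertices and weights $w_{uv}\ge 0$ ($u\to v\in E$ iff $w_{uv}>0$; self-loops allowed): each vertex holds a mutant (fitness $r>0$) or wild-type (fitness $1$); $f_S(u)\in\{1,r\}$ is the fitness at $u$ when $S$ is the mutant set. At each step, with probability $\delta$ a death-Birth step: choose $v\in V$ uniformly to die, then choose $u$ with probability proportional to $f_S(u)\,w_{uv}$, and $u$ copies its type onto $v$; with probability $1-\delta$ a Birth-death step: choose $u$ with probability proportional to $f_S(u)$, then choose $v$ with probability proportional to $w_{uv}$, and $u$ copies its type onto $v$. $\mathsf{fp}_r^\delta(G,S_0)$ is the probability that all vertices eventually become mutant starting from mutant set $S_0$. *)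

theory Defs
  imports "HOL-Analysis.Analysis"
begin

text \<open>Weighted directed graph: finite vertex set V, weights w u v \<ge> 0 (edge u\<rightarrow>v iff w u v > 0).
  States of the process are mutant sets S \<subseteq> V.\<close>

definition fitness :: "real \<Rightarrow> 'a set \<Rightarrow> 'a \<Rightarrow> real" where
  "fitness r S u = (if u \<in> S then r else 1)"

definition edge_rel :: "'a set \<Rightarrow> ('a \<Rightarrow> 'a \<Rightarrow> real) \<Rightarrow> ('a \<times> 'a) set" where
  "edge_rel V w = {(u, v). u \<in> V \<and> v \<in> V \<and> w u v > 0}"

definition strongly_connected :: "'a set \<Rightarrow> ('a \<Rightarrow> 'a \<Rightarrow> real) \<Rightarrow> bool" where
  "strongly_connected V w \<longleftrightarrow> (\<forall>u\<in>V. \<forall>v\<in>V. (u, v) \<in> (edge_rel V w)\<^sup>*)"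

definition uniform_circulation :: "'a set \<Rightarrow> ('a \<Rightarrow> 'a \<Rightarrow> real) \<Rightarrow> bool" where
  "uniform_circulation V w \<longleftrightarrow>
     (\<exists>m>0. \<forall>u\<in>V. (\<Sum>v\<in>V. w u v) = m \<and> (\<Sum>v\<in>V. w v u) = m)"

text \<open>Result of u copying its type onto v.\<close>
definition upd :: "'a set \<Rightarrow> 'a \<Rightarrow> 'a \<Rightarrow> 'a set" where
  "upd S u v = (if u \<in> S then insert v S else S - {v})"

text \<open>Probability that in one step of mixed \<delta>-updating the reproducing vertex is u and
  the replaced vertex is v.\<close>
definition pair_prob :: "'a set \<Rightarrow> ('a \<Rightarrow> 'a \<Rightarrow> real) \<Rightarrow> real \<Rightarrow> real \<Rightarrow> 'a set \<Rightarrow> 'a \<Rightarrow> 'a \<Rightarrow> real" where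
  "pair_prob V w r \<delta> S u v =
     \<delta> * (1 / real (card V)) * (fitness r S u * w u v / (\<Sum>x\<in>V. fitness r S x * w x v))
   + (1 - \<delta>) * (fitness r S u / (\<Sum>x\<in>V. fitness r S x)) * (w u v / (\<Sum>y\<in>V. w u y))"

definition trans_prob :: "'a set \<Rightarrow> ('a \<Rightarrow> 'a \<Rightarrow> real) \<Rightarrow> real \<Rightarrow> real \<Rightarrow> 'a set \<Rightarrow> 'a set \<Rightarrow> real" where
  "trans_prob V w r \<delta> S S' =
     (\<Sum>u\<in>V. \<Sum>v\<in>V. if upd S u v = S' then pair_prob V w r \<delta> S u v else 0)"

text \<open>fix_within n S: probability that starting from S all vertices are mutant after n steps
  (V is absorbing, so this is the probability of fixation within n steps).\<close>
fun fix_within :: "'a set \<Rightarrow> ('a \<Rightarrow> 'a \<Rightarrow> real) \<Rightarrow> real \<Rightarrow> real \<Rightarrow> nat \<Rightarrow> 'a set \<Rightarrow> real" where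
  "fix_within V w r \<delta> 0 S = (if S = V then 1 else 0)"
| "fix_within V w r \<delta> (Suc n) S =
     (\<Sum>S'\<in>Pow V. trans_prob V w r \<delta> S S' * fix_within V w r \<delta> n S')"

definition fp :: "'a set \<Rightarrow> ('a \<Rightarrow> 'a \<Rightarrow> real) \<Rightarrow> real \<Rightarrow> real \<Rightarrow> 'a set \<Rightarrow> real" where
  "fp V w r \<delta> S0 = lim (\<lambda>n. fix_within V w r \<delta> n S0)"

end

(* At r = 1 on a uniform circulation with row and column sums m, both the death-Birth and the
   Birth-death rule let u copy onto v with probability w u v / (N m), independently of \<delta> and of
   the current mutant set. Since this kernel has equal row and column sums, the number of mutants
   is a martingale. Strong connectivity gives every nonempty state a probability at least
   \<epsilon> > 0 of fixation within N steps, so the probability of not yet being absorbed in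
   {} or V decays geometrically. Hence |S0| = fp * N + (1 - fp) * 0 in the limit. *)

theory Submission
  imports Defs
begin

(* The backward operator of the process: (update_step V p ^^ n) f S is the expectation of f
   after n steps from S. *)
definition update_step :: "'a set \<Rightarrow> ('a \<Rightarrow> 'a \<Rightarrow> real) \<Rightarrow> ('a set \<Rightarrow> real) \<Rightarrow> 'a set \<Rightarrow> real" where
  "update_step V p f S = (\<Sum>u\<in>V. \<Sum>v\<in>V. p u v * f (upd S u v))"

lemma update_step_cong:
  "(\<And>u v. u \<in> V \<Longrightarrow> v \<in> V \<Longrightarrow> f (upd S u v) = g (upd S u v))
    \<Longrightarrow> update_step V p f S = update_step V p g S"
  unfolding update_step_def by (intro sum.cong refl) simp

lemma update_step_kernel_cong:
  "(\<And>u v. u \<in> V \<Longrightarrow> v \<in> V \<Longrightarrow> p u v = q u v) \<Longrightarrow> update_step V p f S = update_step V q f S"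
  unfolding update_step_def by (intro sum.cong refl) simp

lemma upd_subset: "S \<subseteq> V \<Longrightarrow> v \<in> V \<Longrightarrow> upd S u v \<subseteq> V"
  by (auto simp: upd_def)

lemma card_upd:
  assumes "finite S"
  shows "real (card (upd S u v)) = real (card S) + of_bool (u \<in> S) - of_bool (v \<in> S)"
proof (cases "v \<in> S")
  case True
  then have "card S \<ge> 1"
    using assms by (auto simp: Suc_le_eq card_gt_0_iff)
  then show ?thesis
    using assms True by (auto simp: upd_def of_nat_diff insert_absorb)
qed (use assms in \<open>auto simp: upd_def\<close>)

lemma reachable_exits:
  "(a, b) \<in> R\<^sup>* \<Longrightarrow> a \<in> S \<Longrightarrow> b \<notin> S \<Longrightarrow> \<exists>u v. (u, v) \<in> R \<and> u \<in> S \<and> v \<notin> S"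
  by (induction rule: rtrancl_induct) auto

locale update_kernel =
  fixes V :: "'a set" and p :: "'a \<Rightarrow> 'a \<Rightarrow> real"
  assumes finite_V: "finite V"
    and p_nonneg: "\<And>u v. u \<in> V \<Longrightarrow> v \<in> V \<Longrightarrow> 0 \<le> p u v"
    and p_sum: "(\<Sum>u\<in>V. \<Sum>v\<in>V. p u v) = 1"
begin

abbreviation step :: "('a set \<Rightarrow> real) \<Rightarrow> 'a set \<Rightarrow> real" where
  "step \<equiv> update_step V p"

lemma iterate_linear:
  "(step ^^ n) (\<lambda>S. a * g S + b * h S) S = a * (step ^^ n) g S + b * (step ^^ n) h S"
proof (induction n arbitrary: S)
  case (Suc n)
  then show ?case
    by (simp add: update_step_def sum_distrib_left sum.distrib algebra_simps)
qed simp

lemma iterate_const: "(step ^^ n) (\<lambda>_. c) S = c"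
proof (induction n arbitrary: S)
  case (Suc n)
  then show ?case
    by (simp add: update_step_def p_sum flip: sum_distrib_right)
qed simp

lemma iterate_mono:
  assumes "\<And>S. S \<subseteq> V \<Longrightarrow> g S \<le> h S" and "S \<subseteq> V"
  shows "(step ^^ n) g S \<le> (step ^^ n) h S"
  using assms(2)
proof (induction n arbitrary: S)
  case 0
  then show ?case using assms(1) by simp
next
  case (Suc n)
  then show ?case
    unfolding funpow.simps comp_def update_step_def
    by (intro sum_mono mult_left_mono p_nonneg) (auto simp: upd_subset)
qed

lemma iterate_nonneg: "(\<And>S. S \<subseteq> V \<Longrightarrow> 0 \<le> g S) \<Longrightarrow> S \<subseteq> V \<Longrightarrow> 0 \<le> (step ^^ n) g S"
  using iterate_mono[of "\<lambda>_. 0" g S n] iterate_const by simp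

lemma iterate_absorbing:
  assumes "\<And>u v. u \<in> V \<Longrightarrow> v \<in> V \<Longrightarrow> upd S u v = S"
  shows "(step ^^ n) g S = g S"
proof (induction n)
  case (Suc n)
  then show ?case
    using assms by (simp add: update_step_def p_sum flip: sum_distrib_right)
qed simp

abbreviation fixation :: "nat \<Rightarrow> 'a set \<Rightarrow> real" where
  "fixation n \<equiv> (step ^^ n) (\<lambda>S. of_bool (S = V))"

abbreviation unabsorbed :: "nat \<Rightarrow> 'a set \<Rightarrow> real" where
  "unabsorbed n \<equiv> (step ^^ n) (\<lambda>S. of_bool (S \<noteq> {} \<and> S \<noteq> V))"

lemma fixation_V: "fixation n V = 1"
  by (subst iterate_absorbing) (auto simp: upd_def)

lemma step_pos:
  assumes "u \<in> V" "v \<in> V" "0 < p u v" "0 < f (upd S u v)"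
    and "\<And>x y. x \<in> V \<Longrightarrow> y \<in> V \<Longrightarrow> 0 \<le> f (upd S x y)"
  shows "0 < step f S"
proof -
  have nonneg: "0 \<le> p x y * f (upd S x y)" if "x \<in> V" "y \<in> V" for x y
    using that assms(5) by (intro mult_nonneg_nonneg p_nonneg)
  have row_pos: "0 < (\<Sum>y\<in>V. p u y * f (upd S u y))"
    by (rule sum_pos2[OF finite_V \<open>v \<in> V\<close>]) (use assms nonneg in auto)
  show ?thesis
    unfolding update_step_def
    by (rule sum_pos2[OF finite_V \<open>u \<in> V\<close>]) (use row_pos in \<open>auto intro: sum_nonneg nonneg\<close>)
qed

lemma unabsorbed_contract:
  assumes fixation_ge: "\<And>S. S \<subseteq> V \<Longrightarrow> S \<noteq> {} \<Longrightarrow> \<epsilon> \<le> fixation N S"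
    and "S \<subseteq> V"
  shows "unabsorbed N S \<le> (1 - \<epsilon>) * of_bool (S \<noteq> {} \<and> S \<noteq> V)"
proof (cases "S = {} \<or> S = V")
  case True
  then show ?thesis
    by (subst iterate_absorbing) (auto simp: upd_def)
next
  case False
  have "unabsorbed N S \<le> (step ^^ N) (\<lambda>S. 1 * 1 + (- 1) * of_bool (S = V)) S"
    using \<open>S \<subseteq> V\<close> by (intro iterate_mono) auto
  also have "\<dots> = 1 - fixation N S"
    using iterate_linear[of N 1 "\<lambda>_. 1" "- 1" "\<lambda>S. of_bool (S = V)" S] by (simp add: iterate_const)
  finally show ?thesis
    using fixation_ge[of S] False \<open>S \<subseteq> V\<close> by simp
qed

lemma unabsorbed_decay:
  assumes fixation_ge: "\<And>S. S \<subseteq> V \<Longrightarrow> S \<noteq> {} \<Longrightarrow> \<epsilon> \<le> fixation N S"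
    and "V \<noteq> {}" and "S \<subseteq> V"
  shows "unabsorbed (k * N + j) S \<le> (1 - \<epsilon>) ^ k"
  using \<open>S \<subseteq> V\<close>
proof (induction k arbitrary: S)
  case 0
  have "unabsorbed j S \<le> (step ^^ j) (\<lambda>_. 1) S"
    using 0 by (intro iterate_mono) auto
  then show ?case
    by (simp add: iterate_const)
next
  case (Suc k)
  have "\<epsilon> \<le> 1"
    using fixation_ge[of V] \<open>V \<noteq> {}\<close> by (simp add: fixation_V)
  have "Suc k * N + j = (k * N + j) + N"
    by simp
  then have "unabsorbed (Suc k * N + j) S = (step ^^ (k * N + j)) (unabsorbed N) S"
    by (simp only: funpow_add comp_def)
  also have "\<dots> \<le> (step ^^ (k * N + j)) (\<lambda>S. (1 - \<epsilon>) * of_bool (S \<noteq> {} \<and> S \<noteq> V)) S"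
    using Suc.prems by (intro iterate_mono unabsorbed_contract fixation_ge)
  also have "\<dots> = (1 - \<epsilon>) * unabsorbed (k * N + j) S"
    using iterate_linear[where b = 0] by (simp add: iterate_const)
  also have "\<dots> \<le> (1 - \<epsilon>) * (1 - \<epsilon>) ^ k"
    using Suc \<open>\<epsilon> \<le> 1\<close> by (intro mult_left_mono) auto
  finally show ?case
    by simp
qed

end

locale circulation_kernel = update_kernel +
  assumes V_nonempty: "V \<noteq> {}"
    and balanced: "\<And>u. u \<in> V \<Longrightarrow> (\<Sum>v\<in>V. p u v) = (\<Sum>v\<in>V. p v u)"
    and irreducible: "strongly_connected V p"
begin

lemma step_card:
  assumes "finite S"
  shows "step (\<lambda>S. real (card S)) S = real (card S)"
proof -
  have "step (\<lambda>S. real (card S)) S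
      = (\<Sum>u\<in>V. \<Sum>v\<in>V. p u v * (real (card S) + of_bool (u \<in> S) - of_bool (v \<in> S)))"
    unfolding update_step_def using assms by (simp add: card_upd)
  also have "\<dots> = real (card S) * (\<Sum>u\<in>V. \<Sum>v\<in>V. p u v)
      + (\<Sum>u\<in>V. of_bool (u \<in> S) * (\<Sum>v\<in>V. p u v))
      - (\<Sum>u\<in>V. \<Sum>v\<in>V. of_bool (v \<in> S) * p u v)"
    by (simp add: algebra_simps sum.distrib sum_subtractf sum_distrib_left sum_distrib_right)
  also have "(\<Sum>u\<in>V. \<Sum>v\<in>V. of_bool (v \<in> S) * p u v)
      = (\<Sum>v\<in>V. of_bool (v \<in> S) * (\<Sum>u\<in>V. p u v))"
    by (subst sum.swap) (simp add: sum_distrib_left)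
  also have "(\<Sum>u\<in>V. of_bool (u \<in> S) * (\<Sum>v\<in>V. p u v))
      = (\<Sum>v\<in>V. of_bool (v \<in> S) * (\<Sum>u\<in>V. p u v))"
    using balanced by (intro sum.cong) auto
  also have "real (card S) * (\<Sum>u\<in>V. \<Sum>v\<in>V. p u v)
      + (\<Sum>v\<in>V. of_bool (v \<in> S) * (\<Sum>u\<in>V. p u v))
      - (\<Sum>v\<in>V. of_bool (v \<in> S) * (\<Sum>u\<in>V. p u v)) = real (card S)"
    by (simp add: p_sum)
  finally show ?thesis .
qed

lemma iterate_card: "finite S \<Longrightarrow> (step ^^ n) (\<lambda>S. real (card S)) S = real (card S)"
proof (induction n arbitrary: S)
  case (Suc n)
  have "(step ^^ Suc n) (\<lambda>S. real (card S)) S = step (\<lambda>S. real (card S)) S"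
    using Suc by (auto intro: update_step_cong simp: upd_def)
  then show ?case
    using step_card[OF Suc.prems] by simp
qed simp

(* Induction on the number of wild types: some edge leads from a mutant to a wild type, and
   copying along it gains a mutant with positive probability. *)
lemma fixation_pos:
  "S \<subseteq> V \<Longrightarrow> S \<noteq> {} \<Longrightarrow> card (V - S) \<le> n \<Longrightarrow> 0 < fixation n S"
proof (induction "card (V - S)" arbitrary: S n)
  case 0
  then have "S = V"
    using finite_V by auto
  then show ?case
    by (simp add: fixation_V)
next
  case (Suc k S)
  have "V - S \<noteq> {}"
    using Suc.hyps(2) by (metis card.empty Zero_not_Suc)
  then obtain a b where "a \<in> S" "b \<in> V" "b \<notin> S"
    using Suc.prems(2) by blast
  then have "(a, b) \<in> (edge_rel V p)\<^sup>*"
    using irreducible Suc.prems(1) unfolding strongly_connected_def by blast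
  then obtain u v where "(u, v) \<in> edge_rel V p" "u \<in> S" "v \<notin> S"
    using reachable_exits \<open>a \<in> S\<close> \<open>b \<notin> S\<close> by metis
  then have uv: "u \<in> V" "v \<in> V" "0 < p u v" "upd S u v = insert v S"
    by (auto simp: edge_rel_def upd_def)
  obtain n' where n: "n = Suc n'" "k \<le> n'"
    using Suc.prems(3) Suc.hyps(2) by (cases n) auto
  have "V - insert v S = (V - S) - {v}"
    by blast
  then have "k = card (V - insert v S)"
    using Suc.hyps(2) uv(2) \<open>v \<notin> S\<close> finite_V by (metis card_Diff_singleton DiffI diff_Suc_1 finite_Diff)
  then have "0 < fixation n' (upd S u v)"
    using Suc.hyps(1)[of "insert v S" n'] Suc.prems(1) uv n by simp
  moreover have "0 \<le> fixation n' (upd S x y)" if "y \<in> V" for x y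
    using that Suc.prems(1) by (intro iterate_nonneg upd_subset) auto
  ultimately have "0 < step (fixation n') S"
    using uv by (intro step_pos)
  then show ?case
    using n by simp
qed

lemma fixation_uniform_bound:
  obtains \<epsilon> where "0 < \<epsilon>" "\<And>S. S \<subseteq> V \<Longrightarrow> S \<noteq> {} \<Longrightarrow> \<epsilon> \<le> fixation (card V) S"
proof
  let ?E = "fixation (card V) ` {S. S \<subseteq> V \<and> S \<noteq> {}}"
  have "finite ?E" "?E \<noteq> {}"
    using finite_V V_nonempty by auto
  moreover have "\<forall>x\<in>?E. 0 < x"
    using finite_V by (auto intro!: fixation_pos card_mono)
  ultimately show "0 < Min ?E"
    by simp
  show "Min ?E \<le> fixation (card V) S" if "S \<subseteq> V" "S \<noteq> {}" for S
    using that \<open>finite ?E\<close> by (intro Min_le) auto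
qed

lemma unabsorbed_tendsto_zero:
  assumes "S \<subseteq> V"
  shows "(\<lambda>n. unabsorbed n S) \<longlonglongrightarrow> 0"
proof -
  obtain \<epsilon> where \<epsilon>: "0 < \<epsilon>" "\<And>S. S \<subseteq> V \<Longrightarrow> S \<noteq> {} \<Longrightarrow> \<epsilon> \<le> fixation (card V) S"
    using fixation_uniform_bound by blast
  have "\<epsilon> \<le> 1"
    using \<epsilon>(2)[of V] V_nonempty by (simp add: fixation_V)
  have "0 < card V"
    using finite_V V_nonempty by (simp add: card_gt_0_iff)
  have bound: "norm (unabsorbed n S) \<le> (1 - \<epsilon>) ^ (n div card V)" for n
  proof -
    have "0 \<le> unabsorbed n S"
      using assms by (intro iterate_nonneg) auto
    moreover have "unabsorbed (n div card V * card V + n mod card V) S \<le> (1 - \<epsilon>) ^ (n div card V)"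
      using \<epsilon>(2) V_nonempty assms by (rule unabsorbed_decay)
    ultimately show ?thesis
      by simp
  qed
  have "(\<lambda>n. (1 - \<epsilon>) ^ (n div card V)) \<longlonglongrightarrow> 0"
    by (rule filterlim_compose[OF LIMSEQ_power_zero filterlim_at_top_div_const_nat])
      (use \<open>0 < \<epsilon>\<close> \<open>\<epsilon> \<le> 1\<close> \<open>0 < card V\<close> in auto)
  then show ?thesis
    by (rule Lim_null_comparison[OF always_eventually, rotated]) (use bound in blast)
qed

lemma fixation_tendsto:
  assumes "S \<subseteq> V"
  shows "(\<lambda>n. fixation n S) \<longlonglongrightarrow> real (card S) / real (card V)"
proof -
  define h :: "'a set \<Rightarrow> real" where "h = (\<lambda>T. real (card T) / real (card V))"
  have "0 < card V"
    using finite_V V_nonempty by (simp add: card_gt_0_iff)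
  have h_lower: "of_bool (T = V) \<le> h T" if "T \<subseteq> V" for T
    using \<open>0 < card V\<close> by (simp add: h_def)
  have h_upper: "h T \<le> of_bool (T = V) + of_bool (T \<noteq> {} \<and> T \<noteq> V)" if "T \<subseteq> V" for T
    using card_mono[OF finite_V that] \<open>0 < card V\<close> by (auto simp: h_def)
  have "(step ^^ n) h S = h S" for n
  proof -
    have "(step ^^ n) (\<lambda>T. (1 / real (card V)) * real (card T) + 0 * 0) S
        = (1 / real (card V)) * real (card S) + 0 * (step ^^ n) (\<lambda>_. 0) S"
      using iterate_card finite_subset[OF assms finite_V] by (simp only: iterate_linear)
    then show ?thesis
      by (simp add: h_def)
  qed
  moreover have "fixation n S \<le> (step ^^ n) h S" for n
    by (intro iterate_mono h_lower assms)
  moreover have "(step ^^ n) h S \<le> fixation n S + unabsorbed n S" for n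
  proof -
    have "(step ^^ n) h S
        \<le> (step ^^ n) (\<lambda>T. of_bool (T = V) + of_bool (T \<noteq> {} \<and> T \<noteq> V)) S"
      by (intro iterate_mono h_upper assms)
    then show ?thesis
      using iterate_linear[of n 1 "\<lambda>T. of_bool (T = V)" 1 "\<lambda>T. of_bool (T \<noteq> {} \<and> T \<noteq> V)" S]
      by simp
  qed
  ultimately have error_bound: "norm (fixation n S - h S) \<le> unabsorbed n S" for n
    by (smt (verit) real_norm_def)
  have "(\<lambda>n. fixation n S - h S) \<longlonglongrightarrow> 0"
    by (rule Lim_null_comparison[OF always_eventually unabsorbed_tendsto_zero[OF assms], rotated])
      (use error_bound in blast)
  then show ?thesis
    unfolding h_def by (rule LIM_zero_cancel)
qed

end

lemma trans_prob_expectation: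
  assumes "finite V" "S \<subseteq> V"
  shows "(\<Sum>S'\<in>Pow V. trans_prob V w r \<delta> S S' * f S') = update_step V (pair_prob V w r \<delta> S) f S"
proof -
  have "(\<Sum>S'\<in>Pow V. trans_prob V w r \<delta> S S' * f S')
      = (\<Sum>S'\<in>Pow V. \<Sum>u\<in>V. \<Sum>v\<in>V. if upd S u v = S' then pair_prob V w r \<delta> S u v * f S' else 0)"
    unfolding trans_prob_def sum_distrib_right by (intro sum.cong refl) simp
  also have "\<dots> = (\<Sum>u\<in>V. \<Sum>v\<in>V. \<Sum>S'\<in>Pow V. if upd S u v = S' then pair_prob V w r \<delta> S u v * f S' else 0)"
    by (simp add: sum.swap[of _ "Pow V"] sum.swap[of _ "Pow V" V])
  also have "\<dots> = update_step V (pair_prob V w r \<delta> S) f S"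
    unfolding update_step_def using assms by (intro sum.cong refl) (simp add: upd_subset)
  finally show ?thesis .
qed

lemma pair_prob_neutral:
  assumes "\<forall>u\<in>V. (\<Sum>v\<in>V. w u v) = m \<and> (\<Sum>v\<in>V. w v u) = m" "u \<in> V" "v \<in> V"
  shows "pair_prob V w 1 \<delta> S u v = w u v / (real (card V) * m)"
proof -
  have "(\<Sum>x\<in>V. fitness 1 S x * w x v) = m" "(\<Sum>x\<in>V. fitness 1 S x) = real (card V)"
      "(\<Sum>y\<in>V. w u y) = m"
    using assms by (simp_all add: fitness_def)
  then have "pair_prob V w 1 \<delta> S u v
      = \<delta> * (w u v / (real (card V) * m)) + (1 - \<delta>) * (w u v / (real (card V) * m))"
    unfolding pair_prob_def by (simp add: fitness_def)
  then show ?thesis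
    by (simp flip: add_divide_distrib distrib_right)
qed

lemma fix_within_neutral:
  assumes "finite V" "\<forall>u\<in>V. (\<Sum>v\<in>V. w u v) = m \<and> (\<Sum>v\<in>V. w v u) = m" "S \<subseteq> V"
  shows "fix_within V w 1 \<delta> n S
    = (update_step V (\<lambda>u v. w u v / (real (card V) * m)) ^^ n) (\<lambda>S. of_bool (S = V)) S"
  using assms(3)
proof (induction n arbitrary: S)
  case (Suc n)
  let ?p = "\<lambda>u v. w u v / (real (card V) * m)"
  have "fix_within V w 1 \<delta> (Suc n) S
      = (\<Sum>S'\<in>Pow V. trans_prob V w 1 \<delta> S S' * (update_step V ?p ^^ n) (\<lambda>S. of_bool (S = V)) S')"
    using Suc.IH by (auto intro: sum.cong)
  also have "\<dots> = update_step V (pair_prob V w 1 \<delta> S) ((update_step V ?p ^^ n) (\<lambda>S. of_bool (S = V))) S"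
    using assms(1) Suc.prems by (rule trans_prob_expectation)
  also have "\<dots> = update_step V ?p ((update_step V ?p ^^ n) (\<lambda>S. of_bool (S = V))) S"
    using assms(2) by (intro update_step_kernel_cong pair_prob_neutral)
  finally show ?case
    by simp
qed simp

lemma circulation_kernel_uniform_circulation:
  assumes "finite V" "V \<noteq> {}" "\<forall>u v. 0 \<le> w u v" "strongly_connected V w"
    and "0 < m" "\<forall>u\<in>V. (\<Sum>v\<in>V. w u v) = m \<and> (\<Sum>v\<in>V. w v u) = m"
  shows "circulation_kernel V (\<lambda>u v. w u v / (real (card V) * m))"
    (is "circulation_kernel V ?p")
proof
  have "0 < real (card V) * m"
    using assms(1,2,5) by (simp add: card_gt_0_iff)
  then have "edge_rel V ?p = edge_rel V w"
    by (simp add: edge_rel_def zero_less_divide_iff)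
  then show "strongly_connected V ?p"
    using assms(4) by (simp add: strongly_connected_def)
  show "(\<Sum>u\<in>V. \<Sum>v\<in>V. ?p u v) = 1"
    using assms(1,2,5,6) by (simp add: card_gt_0_iff flip: sum_divide_distrib)
  show "(\<Sum>v\<in>V. ?p u v) = (\<Sum>v\<in>V. ?p v u)" if "u \<in> V" for u
    using assms(6) that by (simp flip: sum_divide_distrib)
qed (use assms(1-3,5) in auto)

theorem mainTheorem2:
  fixes V :: "'a set" and w :: "'a \<Rightarrow> 'a \<Rightarrow> real" and S0 :: "'a set" and \<delta> :: real
  assumes "finite V" and "V \<noteq> {}"
    and "\<forall>u v. w u v \<ge> 0"
    and "strongly_connected V w"
    and "uniform_circulation V w"
    and "S0 \<subseteq> V"
    and "0 \<le> \<delta>" and "\<delta> \<le> 1"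
  shows "fp V w 1 \<delta> S0 = real (card S0) / real (card V)"
proof -
  obtain m where m: "m > 0" "\<forall>u\<in>V. (\<Sum>v\<in>V. w u v) = m \<and> (\<Sum>v\<in>V. w v u) = m"
    using assms(5) unfolding uniform_circulation_def by blast
  interpret circulation_kernel V "\<lambda>u v. w u v / (real (card V) * m)"
    using assms(1-4) m by (rule circulation_kernel_uniform_circulation)
  show ?thesis
    unfolding fp_def fix_within_neutral[OF assms(1) m(2) assms(6)]
    using fixation_tendsto[OF assms(6)] by (rule limI)
qed

end
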